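(* Let $K=\{x\in[0,1]^n: g_\ell(x)\ge 0,\ \ell=1,\dots,m\}$ with affine $g_\ell$, $V=[n]$, $t>1$, $y\in\mathrm{La}^t(K)$, $k<t$ a positive integer and $S\subseteq V$ such that $y_I=0$ for every $I\in\mathcal P_{2t}(V)$ with $|I\cap S|\ge k$. Let $y'$ be the extension of $y$ (so $y'_I=y_I$ if $|I|\le 2t$ and $y'_I=0$ otherwise), and for $X\subseteq S$ let $z^X_I=\sum_{J:\,X\subseteq J\subseteq S}(-1)^{|J\setminus X|}y'_{I\cup J}$ for all $I\subseteq V$. Let $\mathcal T_1=\{A\subseteq V: |A\setminus S|\le t-k\}$ and $\mathcal T_2=\{B\subseteq V:|B\setminus S|<t-k\}$. Then for every $X\subseteq S$: $M_{\mathcal T_1}(z^X)\succeq0$, and $M_{\mathcal T_2}(g_\ell*z^X)\succeq 0$ for every $\ell$.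
   Context: Notation: $\mathcal P_t(U)$ is the set of subsets of $U$ of size at most $t$. For a collection $\mathcal T$ of subsets and a vector $y$ indexed by subsets, $M_{\mathcal T}(y)$ is the symmetric matrix indexed by $\mathcal T$ with $(I,J)$-entry $y_{I\cup J}$. For an affine $g(x)=b+\sum_{j}a_jx_j$, $(g*y)_I=b\,y_I+\sum_j a_j y_{I\cup\{j\}}$. The $t$-th Lasserre lifted polytope $\mathrm{La}^t(K)$ of $K=\{x\in[0,1]^n:g_\ell(x)\ge0,\ \ell=1,\dots,m\}$ is the set of $y\in[0,1]^{\mathcal P_{2t}(V)}$ with $y_\emptyset=1$, $M_{\mathcal P_t(V)}(y)\succeq0$, and $M_{\mathcal P_{t-1}(V)}(g_\ell*y)\succeq0$ for all $\ell$. *)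

theory Defs
  imports Complex_Main
begin

definition Psub :: "nat set \<Rightarrow> nat \<Rightarrow> nat set set" where
  "Psub U s = {I. I \<subseteq> U \<and> card I \<le> s}"

definition psd_on :: "'a set \<Rightarrow> ('a \<Rightarrow> 'a \<Rightarrow> real) \<Rightarrow> bool" where
  "psd_on T M \<longleftrightarrow> (\<forall>I\<in>T. \<forall>J\<in>T. M I J = M J I) \<and>
     (\<forall>v::'a \<Rightarrow> real. 0 \<le> (\<Sum>I\<in>T. \<Sum>J\<in>T. v I * M I J * v J))"

definition moment :: "(nat set \<Rightarrow> real) \<Rightarrow> nat set \<Rightarrow> nat set \<Rightarrow> real" where
  "moment y I J = y (I \<union> J)"

text \<open>(g * y)_I for affine g(x) = b + sum_{j in V} a_j x_j.\<close>
definition gstar :: "nat set \<Rightarrow> real \<Rightarrow> (nat \<Rightarrow> real) \<Rightarrow> (nat set \<Rightarrow> real) \<Rightarrow> nat set \<Rightarrow> real" where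
  "gstar V b a y I = b * y I + (\<Sum>j\<in>V. a j * y (I \<union> {j}))"

text \<open>y in La^t(K), K = {x in [0,1]^n : g_l(x) >= 0, l=1..m}, g_l(x) = b l + sum_j a l j * x_j, V = {1..n}.\<close>
definition lasserre :: "nat \<Rightarrow> nat \<Rightarrow> nat \<Rightarrow> (nat \<Rightarrow> real) \<Rightarrow> (nat \<Rightarrow> nat \<Rightarrow> real)
    \<Rightarrow> (nat set \<Rightarrow> real) \<Rightarrow> bool" where
  "lasserre n m t b a y \<longleftrightarrow>
     (\<forall>I\<in>Psub {1..n} (2*t). 0 \<le> y I \<and> y I \<le> 1) \<and> y {} = 1 \<and>
     psd_on (Psub {1..n} t) (moment y) \<and>
     (\<forall>l\<in>{1..m}. psd_on (Psub {1..n} (t - 1)) (moment (gstar {1..n} (b l) (a l) y)))"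

definition ext :: "nat \<Rightarrow> (nat set \<Rightarrow> real) \<Rightarrow> nat set \<Rightarrow> real" where
  "ext t y I = (if card I \<le> 2*t then y I else 0)"

definition zvec :: "nat set \<Rightarrow> nat \<Rightarrow> (nat set \<Rightarrow> real) \<Rightarrow> nat set \<Rightarrow> nat set \<Rightarrow> real" where
  "zvec S t y X I = (\<Sum>J\<in>{J. X \<subseteq> J \<and> J \<subseteq> S}. (-1) ^ card (J - X) * ext t y (I \<union> J))"

end

theory Submission imports Defs begin

(* Writing R = S - X, the vector z^X is the signed sum
     z(I) = sum over U subset of R of (-1)^|U| * H(I u X u U)
   with H = y' (and, for the constraint matrices, H = g * y', since g * commutes with the
   signed sum).  The signed-sum operator is idempotent, hence
     z(A u B) = sum over U1, U2 of (-1)^|U1| (-1)^|U2| H((A u X u U1) u (B u X u U2)),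
   so the quadratic form of M_T(z) in a vector v is a quadratic form of the moment matrix of H,
   indexed by the sets A u X u U and with weights collected along the fibres of A,U |-> A u X u U.
   Rows K with at least k elements in S vanish (by the hypothesis on y); all other rows have at
   most |K - S| + k - 1 elements, so they lie in P_r(V) where H agrees with the moment vector G
   of the Lasserre relaxation, and nonnegativity follows from M_{P_r(V)}(G) being PSD. *)

section \<open>Signed sums over subsets\<close>

lemma sum_Pow_insert:
  fixes h :: "'a set \<Rightarrow> real"
  assumes "finite F" "x \<notin> F"
  shows "sum h (Pow (insert x F)) = sum h (Pow F) + (\<Sum>U\<in>Pow F. h (insert x U))"
proof -
  have disjoint: "Pow F \<inter> insert x ` Pow F = {}" using assms by auto
  have inj: "inj_on (insert x) (Pow F)"
    using assms unfolding inj_on_def by (metis PowD insert_ident subsetD)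
  have "sum h (Pow (insert x F)) = sum h (Pow F \<union> insert x ` Pow F)" by (simp add: Pow_insert)
  also have "\<dots> = sum h (Pow F) + sum h (insert x ` Pow F)"
    using disjoint assms by (intro sum.union_disjoint) auto
  also have "sum h (insert x ` Pow F) = (\<Sum>U\<in>Pow F. h (insert x U))"
    using inj by (simp add: sum.reindex)
  finally show ?thesis .
qed

lemma signed_Pow_sum_idem:
  fixes g :: "'a set \<Rightarrow> real"
  assumes "finite R"
  shows "(\<Sum>U1\<in>Pow R. \<Sum>U2\<in>Pow R. (-1)^(card U1 + card U2) * g (U1 \<union> U2))
         = (\<Sum>U\<in>Pow R. (-1)^card U * g U)"
  using assms
proof (induction R arbitrary: g rule: finite_induct)
  case empty
  then show ?case by simp
next
  case (insert x F)
  have card_ins: "\<And>U. U \<in> Pow F \<Longrightarrow> card (insert x U) = Suc (card U)"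
    using insert by (meson PowD finite_subset card_insert_disjoint subsetD)
  define A where "A = (\<Sum>U1\<in>Pow F. \<Sum>U2\<in>Pow F. (-1::real)^(card U1 + card U2) * g (U1 \<union> U2))"
  define B where
    "B = (\<Sum>U1\<in>Pow F. \<Sum>U2\<in>Pow F. (-1::real)^(card U1 + card U2) * g (insert x (U1 \<union> U2)))"
  have IH_A: "A = (\<Sum>U\<in>Pow F. (-1)^card U * g U)" unfolding A_def by (rule insert.IH)
  have IH_B: "B = (\<Sum>U\<in>Pow F. (-1)^card U * g (insert x U))" unfolding B_def
    using insert.IH[of "\<lambda>U. g (insert x U)"] by simp
  text \<open>Placing x in neither, only one, or both of U1, U2 contributes A, -B, -B and +B
    respectively, in total A - B.\<close>
  have "(\<Sum>U1\<in>Pow (insert x F). \<Sum>U2\<in>Pow (insert x F).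
            (-1::real)^(card U1 + card U2) * g (U1 \<union> U2))
     = (\<Sum>U1\<in>Pow F. (\<Sum>U2\<in>Pow F. (-1::real)^(card U1 + card U2) * g (U1 \<union> U2))
          - (\<Sum>U2\<in>Pow F. (-1::real)^(card U1 + card U2) * g (insert x (U1 \<union> U2))))
       + (\<Sum>U1\<in>Pow F. - (\<Sum>U2\<in>Pow F. (-1::real)^(card U1 + card U2) * g (insert x (U1 \<union> U2)))
          + (\<Sum>U2\<in>Pow F. (-1::real)^(card U1 + card U2) * g (insert x (U1 \<union> U2))))"
    using insert(1,2) by (simp add: sum_Pow_insert card_ins sum_negf sum_subtractf sum.distrib)
  also have "\<dots> = A - B" by (simp add: A_def B_def sum_subtractf)
  also have "\<dots> = (\<Sum>U\<in>Pow (insert x F). (-1)^card U * g U)"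
    using insert(1,2) IH_A IH_B by (simp add: sum_Pow_insert card_ins sum_negf sum_subtractf)
  finally show ?case .
qed

section \<open>Quadratic forms\<close>

lemma sum_by_fibres:
  fixes c :: "'p \<Rightarrow> real" and \<kappa> :: "'p \<Rightarrow> 'k"
  assumes "finite P"
  shows "(\<Sum>p\<in>P. c p * \<phi> (\<kappa> p)) = (\<Sum>K\<in>\<kappa> ` P. (\<Sum>p\<in>{p\<in>P. \<kappa> p = K}. c p) * \<phi> K)"
proof -
  have "(\<Sum>p\<in>P. c p * \<phi> (\<kappa> p)) = (\<Sum>K\<in>\<kappa> ` P. \<Sum>p\<in>{p\<in>P. \<kappa> p = K}. c p * \<phi> (\<kappa> p))"
    using assms by (rule sum.image_gen)
  also have "\<dots> = (\<Sum>K\<in>\<kappa> ` P. (\<Sum>p\<in>{p\<in>P. \<kappa> p = K}. c p) * \<phi> K)"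
    by (intro sum.cong refl) (simp add: sum_distrib_right)
  finally show ?thesis .
qed

lemma quadratic_form_pushforward:
  fixes c :: "'p \<Rightarrow> real" and \<kappa> :: "'p \<Rightarrow> 'k" and M :: "'k \<Rightarrow> 'k \<Rightarrow> real"
  assumes "finite P"
  defines "w \<equiv> \<lambda>K. \<Sum>p\<in>{p\<in>P. \<kappa> p = K}. c p"
  shows "(\<Sum>p\<in>P. \<Sum>q\<in>P. c p * M (\<kappa> p) (\<kappa> q) * c q) = (\<Sum>K\<in>\<kappa> ` P. \<Sum>L\<in>\<kappa> ` P. w K * M K L * w L)"
proof -
  have "(\<Sum>p\<in>P. \<Sum>q\<in>P. c p * M (\<kappa> p) (\<kappa> q) * c q) = (\<Sum>p\<in>P. c p * (\<Sum>q\<in>P. c q * M (\<kappa> p) (\<kappa> q)))"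
    by (simp add: sum_distrib_left mult_ac)
  also have "\<dots> = (\<Sum>p\<in>P. c p * (\<Sum>L\<in>\<kappa> ` P. w L * M (\<kappa> p) L))"
    unfolding w_def using sum_by_fibres[OF assms(1), of c "M _" \<kappa>] by simp
  also have "\<dots> = (\<Sum>K\<in>\<kappa> ` P. w K * (\<Sum>L\<in>\<kappa> ` P. w L * M K L))"
    unfolding w_def using sum_by_fibres[OF assms(1), of c "\<lambda>K. \<Sum>L\<in>\<kappa> ` P. _ L * M K L" \<kappa>] by simp
  also have "\<dots> = (\<Sum>K\<in>\<kappa> ` P. \<Sum>L\<in>\<kappa> ` P. w K * M K L * w L)"
    by (simp add: sum_distrib_left mult_ac)
  finally show ?thesis .
qed

lemma quadratic_form_zero_padding:
  fixes u :: "'a \<Rightarrow> real"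
  assumes "finite B" "A \<subseteq> B" "\<And>x. x \<in> B - A \<Longrightarrow> u x = 0"
  shows "(\<Sum>K\<in>A. \<Sum>L\<in>A. u K * M K L * u L) = (\<Sum>K\<in>B. \<Sum>L\<in>B. u K * M K L * u L)"
proof -
  have "(\<Sum>K\<in>A. \<Sum>L\<in>A. u K * M K L * u L) = (\<Sum>K\<in>A. \<Sum>L\<in>B. u K * M K L * u L)"
    using assms by (intro sum.cong refl sum.mono_neutral_left) auto
  also have "\<dots> = (\<Sum>K\<in>B. \<Sum>L\<in>B. u K * M K L * u L)"
    using assms by (intro sum.mono_neutral_left) auto
  finally show ?thesis .
qed

section \<open>An abstract positivity criterion for signed sums of moment vectors\<close>

lemma signed_sum_moment_form:
  fixes H z v :: "nat set \<Rightarrow> real"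
  assumes "finite R"
    and z: "\<And>I. z I = (\<Sum>U\<in>Pow R. (-1)^card U * H (I \<union> X \<union> U))"
    and c: "\<And>A U. c (A, U) = v A * (-1)^card U"
    and \<kappa>: "\<And>A U. \<kappa> (A, U) = A \<union> X \<union> U"
  shows "(\<Sum>A\<in>T. \<Sum>B\<in>T. v A * moment z A B * v B)
       = (\<Sum>p\<in>T \<times> Pow R. \<Sum>q\<in>T \<times> Pow R. c p * H (\<kappa> p \<union> \<kappa> q) * c q)"
proof -
  have z_union: "z (A \<union> B) = (\<Sum>U1\<in>Pow R. \<Sum>U2\<in>Pow R. (-1)^card U1 * (-1)^card U2 *
        H ((A \<union> X \<union> U1) \<union> (B \<union> X \<union> U2)))" for A B
  proof -
    have "z (A \<union> B)
        = (\<Sum>U1\<in>Pow R. \<Sum>U2\<in>Pow R. (-1)^(card U1 + card U2) * H (A \<union> B \<union> X \<union> (U1 \<union> U2)))"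
      using z signed_Pow_sum_idem[OF assms(1), of "\<lambda>U. H (A \<union> B \<union> X \<union> U)"] by simp
    then show ?thesis by (simp add: power_add Un_ac)
  qed
  have "(\<Sum>A\<in>T. \<Sum>B\<in>T. v A * moment z A B * v B)
      = (\<Sum>A\<in>T. \<Sum>U1\<in>Pow R. \<Sum>B\<in>T. \<Sum>U2\<in>Pow R. c (A,U1) * H (\<kappa> (A,U1) \<union> \<kappa> (B,U2)) * c (B,U2))"
    unfolding moment_def z_union c \<kappa>
    by (subst sum.swap) (simp add: sum_distrib_left sum_distrib_right mult_ac)
  also have "\<dots> = (\<Sum>p\<in>T \<times> Pow R. \<Sum>q\<in>T \<times> Pow R. c p * H (\<kappa> p \<union> \<kappa> q) * c q)"
    by (simp only: sum.cartesian_product')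
  finally show ?thesis .
qed

lemma moment_form_nonneg:
  fixes H G w :: "nat set \<Rightarrow> real"
  assumes "finite V"
    and vanish: "\<And>K L. K \<subseteq> V \<Longrightarrow> L \<subseteq> V \<Longrightarrow> k \<le> card (K \<inter> S) \<Longrightarrow> H (K \<union> L) = 0"
    and agree: "\<And>K L. K \<in> Psub V r \<Longrightarrow> L \<in> Psub V r \<Longrightarrow> H (K \<union> L) = G (K \<union> L)"
    and psd: "psd_on (Psub V r) (moment G)"
    and family: "\<And>K. K \<in> \<K> \<Longrightarrow> K \<subseteq> V \<and> card (K - S) + k \<le> r"
  shows "0 \<le> (\<Sum>K\<in>\<K>. \<Sum>L\<in>\<K>. w K * H (K \<union> L) * w L)"
proof -
  define light where "light K \<longleftrightarrow> K \<in> \<K> \<and> card (K \<inter> S) < k" for K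
  define w' where "w' K = (if light K then w K else 0)" for K
  have "\<K> \<subseteq> Pow V" using family by blast
  then have fin: "finite \<K>" using \<open>finite V\<close> finite_subset by blast
  have light_Psub: "K \<in> Psub V r" if "light K" for K
  proof -
    have "K \<subseteq> V" "card (K - S) + k \<le> r" using that family unfolding light_def by auto
    moreover have "card K = card (K \<inter> S) + card (K - S)"
      using \<open>K \<subseteq> V\<close> \<open>finite V\<close> finite_subset card_Int_Diff by blast
    ultimately show ?thesis using that unfolding light_def Psub_def by auto
  qed
  have light_terms: "w K * H (K \<union> L) * w L = w' K * moment G K L * w' L"
    if "K \<in> \<K>" "L \<in> \<K>" for K L
  proof (cases "light K \<and> light L")
    case True
    then have "K \<in> Psub V r" "L \<in> Psub V r" using light_Psub by blast+
    then have "H (K \<union> L) = G (K \<union> L)" by (rule agree)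
    then show ?thesis using True by (simp add: w'_def moment_def)
  next
    case False
    then have heavy: "k \<le> card (K \<inter> S) \<or> k \<le> card (L \<inter> S)"
      using that unfolding light_def by linarith
    have KL: "K \<subseteq> V" "L \<subseteq> V" using that family by blast+
    have "H (K \<union> L) = 0"
    proof (cases "k \<le> card (K \<inter> S)")
      case True
      then show ?thesis by (rule vanish[OF KL])
    next
      case False
      then have "k \<le> card (L \<inter> S)" using heavy by simp
      then have "H (L \<union> K) = 0" by (rule vanish[OF KL(2,1)])
      then show ?thesis by (simp add: Un_commute)
    qed
    moreover have "w' K = 0 \<or> w' L = 0" using False unfolding w'_def by simp
    ultimately show ?thesis by auto
  qed
  have "(\<Sum>K\<in>\<K>. \<Sum>L\<in>\<K>. w K * H (K \<union> L) * w L) = (\<Sum>K\<in>\<K>. \<Sum>L\<in>\<K>. w' K * moment G K L * w' L)"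
    using light_terms by simp
  also have "\<dots> = (\<Sum>K\<in>\<K> \<union> Psub V r. \<Sum>L\<in>\<K> \<union> Psub V r. w' K * moment G K L * w' L)"
    using fin \<open>finite V\<close> by (intro quadratic_form_zero_padding) (auto simp: w'_def light_def Psub_def)
  also have "\<dots> = (\<Sum>K\<in>Psub V r. \<Sum>L\<in>Psub V r. w' K * moment G K L * w' L)"
    using fin \<open>finite V\<close> light_Psub
    by (intro quadratic_form_zero_padding[symmetric]) (auto simp: w'_def Psub_def)
  also have "\<dots> \<ge> 0" using psd unfolding psd_on_def by blast
  finally show ?thesis .
qed

lemma signed_sum_moment_psd:
  fixes H G z :: "nat set \<Rightarrow> real"
  assumes "finite V" "S \<subseteq> V" "X \<subseteq> S"
    and vanish: "\<And>K L. K \<subseteq> V \<Longrightarrow> L \<subseteq> V \<Longrightarrow> k \<le> card (K \<inter> S) \<Longrightarrow> H (K \<union> L) = 0"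
    and agree: "\<And>K L. K \<in> Psub V r \<Longrightarrow> L \<in> Psub V r \<Longrightarrow> H (K \<union> L) = G (K \<union> L)"
    and psd: "psd_on (Psub V r) (moment G)"
    and T: "\<And>A. A \<in> T \<Longrightarrow> A \<subseteq> V \<and> card (A - S) + k \<le> r"
    and z: "\<And>I. z I = (\<Sum>U\<in>Pow (S - X). (-1)^card U * H (I \<union> X \<union> U))"
  shows "psd_on T (moment z)"
  unfolding psd_on_def
proof (intro conjI ballI allI)
  fix I J show "moment z I J = moment z J I" by (simp add: moment_def Un_commute)
next
  fix v :: "nat set \<Rightarrow> real"
  define P where "P = T \<times> Pow (S - X)"
  define c :: "nat set \<times> nat set \<Rightarrow> real" where "c = (\<lambda>(A, U). v A * (-1)^card U)"
  define \<kappa> :: "nat set \<times> nat set \<Rightarrow> nat set" where "\<kappa> = (\<lambda>(A, U). A \<union> X \<union> U)"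
  have "T \<subseteq> Pow V" using T by blast
  then have "finite T" using \<open>finite V\<close> finite_subset by blast
  moreover have "finite (S - X)" using assms(1,2) finite_subset by blast
  ultimately have "finite P" unfolding P_def by simp
  have \<kappa>_family: "K \<subseteq> V \<and> card (K - S) + k \<le> r" if K: "K \<in> \<kappa> ` P" for K
  proof -
    obtain p where p: "K = \<kappa> p" "p \<in> P" using K by (rule imageE)
    obtain A U where "p = (A, U)" by (cases p)
    with p have AU: "A \<in> T" "U \<subseteq> S - X" "K = A \<union> X \<union> U" by (auto simp: P_def \<kappa>_def)
    have "A \<subseteq> V" "card (A - S) + k \<le> r" using T[OF AU(1)] by auto
    moreover have "K - S = A - S" using AU(2,3) \<open>X \<subseteq> S\<close> by blast
    moreover have "K \<subseteq> V" using AU(2,3) \<open>A \<subseteq> V\<close> assms(2,3) by blast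
    ultimately show ?thesis by simp
  qed
  have "(\<Sum>A\<in>T. \<Sum>B\<in>T. v A * moment z A B * v B) = (\<Sum>p\<in>P. \<Sum>q\<in>P. c p * H (\<kappa> p \<union> \<kappa> q) * c q)"
    unfolding P_def by (rule signed_sum_moment_form[OF _ z]) (auto simp: c_def \<kappa>_def \<open>finite (S - X)\<close>)
  also have "\<dots> = (\<Sum>K\<in>\<kappa> ` P. \<Sum>L\<in>\<kappa> ` P.
      (\<Sum>p\<in>{p\<in>P. \<kappa> p = K}. c p) * H (K \<union> L) * (\<Sum>p\<in>{p\<in>P. \<kappa> p = L}. c p))"
    using quadratic_form_pushforward[OF \<open>finite P\<close>, of c "\<lambda>K L. H (K \<union> L)" \<kappa>] by simp
  also have "\<dots> \<ge> 0"
    by (rule moment_form_nonneg[of V k S H r G, OF \<open>finite V\<close> vanish agree psd \<kappa>_family])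
  finally show "0 \<le> (\<Sum>A\<in>T. \<Sum>B\<in>T. v A * moment z A B * v B)" .
qed

section \<open>The vectors z^X and the Lasserre data\<close>

lemma zvec_signed_sum:
  assumes "finite S" "X \<subseteq> S"
  shows "zvec S t y X I = (\<Sum>U\<in>Pow (S - X). (-1)^card U * ext t y (I \<union> X \<union> U))"
proof -
  have range: "{J. X \<subseteq> J \<and> J \<subseteq> S} = (\<lambda>U. X \<union> U) ` Pow (S - X)"
  proof (intro set_eqI iffI)
    fix J assume "J \<in> {J. X \<subseteq> J \<and> J \<subseteq> S}"
    then have "J = X \<union> (J - X)" "J - X \<in> Pow (S - X)" by auto
    then show "J \<in> (\<lambda>U. X \<union> U) ` Pow (S - X)" by blast
  qed (use assms in auto)
  have "inj_on (\<lambda>U. X \<union> U) (Pow (S - X))" unfolding inj_on_def by auto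
  moreover have "\<And>U. U \<in> Pow (S - X) \<Longrightarrow> X \<union> U - X = U" by auto
  ultimately show ?thesis unfolding zvec_def range by (simp add: sum.reindex Un_assoc)
qed

lemma gstar_zvec_signed_sum:
  assumes "finite S" "X \<subseteq> S"
  shows "gstar V b a (zvec S t y X) I
     = (\<Sum>U\<in>Pow (S - X). (-1)^card U * gstar V b a (ext t y) (I \<union> X \<union> U))"
proof -
  have "gstar V b a (zvec S t y X) I
      = (\<Sum>U\<in>Pow (S - X). (-1)^card U * (b * ext t y (I \<union> X \<union> U)))
      + (\<Sum>U\<in>Pow (S - X). \<Sum>j\<in>V. (-1)^card U * (a j * ext t y (I \<union> X \<union> U \<union> {j})))"
    unfolding gstar_def zvec_signed_sum[OF assms]
    by (subst sum.swap) (simp add: sum_distrib_left Un_ac mult_ac)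
  then show ?thesis by (simp add: gstar_def sum.distrib distrib_left sum_distrib_left)
qed

lemma ext_vanish:
  assumes "finite V"
    and heavy: "\<forall>I\<in>Psub V (2*t). k \<le> card (I \<inter> S) \<longrightarrow> y I = 0"
    and "K \<subseteq> V" "L \<subseteq> V" "k \<le> card (K \<inter> S)"
  shows "ext t y (K \<union> L) = 0"
proof -
  have "finite ((K \<union> L) \<inter> S)" using assms(1,3,4) finite_subset by blast
  then have "card (K \<inter> S) \<le> card ((K \<union> L) \<inter> S)" by (rule card_mono) auto
  then have "k \<le> card ((K \<union> L) \<inter> S)" using assms(5) by linarith
  then show ?thesis using heavy assms(3,4) unfolding ext_def Psub_def by auto
qed

text \<open>Vanishing on such unions is preserved by g *, which only adds one element.\<close>
lemma gstar_vanish: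
  assumes vanish: "\<And>K L. K \<subseteq> V \<Longrightarrow> L \<subseteq> V \<Longrightarrow> k \<le> card (K \<inter> S) \<Longrightarrow> H (K \<union> L) = 0"
    and "K \<subseteq> V" "L \<subseteq> V" "k \<le> card (K \<inter> S)"
  shows "gstar V b a H (K \<union> L) = 0"
proof -
  have "H (K \<union> L \<union> {j}) = 0" if "j \<in> V" for j
    using vanish[of K "L \<union> {j}"] assms(2-4) that by (simp add: Un_assoc)
  then show ?thesis using vanish[OF assms(2-4)] unfolding gstar_def by simp
qed

lemma ext_agree:
  assumes "K \<in> Psub V t" "L \<in> Psub V t"
  shows "ext t y (K \<union> L) = y (K \<union> L)"
  using assms card_Un_le[of K L] unfolding Psub_def ext_def by auto

text \<open>On P_(t-1)(V) the matrices of g * y' and g * y coincide,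
  since every index of the form K \<union> L \<union> {j} still has at most 2t elements.\<close>
lemma gstar_ext_agree:
  assumes "0 < t" "K \<in> Psub V (t - 1)" "L \<in> Psub V (t - 1)"
  shows "gstar V b a (ext t y) (K \<union> L) = gstar V b a y (K \<union> L)"
proof -
  have "card (K \<union> L \<union> {j}) \<le> 2 * t" for j
    using assms card_Un_le[of "K \<union> L" "{j}"] card_Un_le[of K L] unfolding Psub_def by auto
  moreover have "card (K \<union> L) \<le> 2 * t"
    using assms card_Un_le[of K L] unfolding Psub_def by auto
  ultimately show ?thesis unfolding gstar_def ext_def by simp
qed

theorem mainTheorem7:
  fixes n m t k :: nat and b :: "nat \<Rightarrow> real" and a :: "nat \<Rightarrow> nat \<Rightarrow> real"
    and y :: "nat set \<Rightarrow> real" and S X :: "nat set"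
  assumes "1 < t"
    and "lasserre n m t b a y"
    and "0 < k" and "k < t"
    and "S \<subseteq> {1..n}"
    and "\<forall>I\<in>Psub {1..n} (2*t). k \<le> card (I \<inter> S) \<longrightarrow> y I = 0"
    and "X \<subseteq> S"
  shows "psd_on {A. A \<subseteq> {1..n} \<and> card (A - S) \<le> t - k} (moment (zvec S t y X)) \<and>
    (\<forall>l\<in>{1..m}. psd_on {B. B \<subseteq> {1..n} \<and> card (B - S) < t - k}
                 (moment (gstar {1..n} (b l) (a l) (zvec S t y X))))"
proof -
  let ?V = "{1..n::nat}"
  have "finite ?V" by simp
  have "finite S" using assms(5) finite_subset by blast
  have "0 < t" using assms(1) by simp
  have moments: "psd_on (Psub ?V t) (moment y)"
    and localizing: "\<And>l. l \<in> {1..m} \<Longrightarrow> psd_on (Psub ?V (t - 1)) (moment (gstar ?V (b l) (a l) y))"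
    using assms(2) unfolding lasserre_def by auto
  have vanish: "ext t y (K \<union> L) = 0" if "K \<subseteq> ?V" "L \<subseteq> ?V" "k \<le> card (K \<inter> S)" for K L
    using ext_vanish[OF \<open>finite ?V\<close> assms(6) that] .
  have "psd_on {A. A \<subseteq> ?V \<and> card (A - S) \<le> t - k} (moment (zvec S t y X))"
    by (rule signed_sum_moment_psd[of ?V S X k "ext t y" t y,
          OF \<open>finite ?V\<close> assms(5,7) vanish ext_agree moments])
      (use assms(4) zvec_signed_sum[OF \<open>finite S\<close> assms(7)] in auto)
  moreover have "psd_on {B. B \<subseteq> ?V \<and> card (B - S) < t - k} (moment (gstar ?V (b l) (a l) (zvec S t y X)))"
    if "l \<in> {1..m}" for l
    by (rule signed_sum_moment_psd[of ?V S X k "gstar ?V (b l) (a l) (ext t y)" "t - 1"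
          "gstar ?V (b l) (a l) y", OF \<open>finite ?V\<close> assms(5,7)
          gstar_vanish[of ?V k S "ext t y", OF vanish] gstar_ext_agree[OF \<open>0 < t\<close>] localizing[OF that]])
      (use assms(4) gstar_zvec_signed_sum[OF \<open>finite S\<close> assms(7)] in auto)
  ultimately show ?thesis by blast
qed

end
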